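(* Let $U$ be a finite nonempty set, $R$ an equivalence relation on $U$, and $M(R)$ the support matroid induced by $R$. For every $X\subseteq U$, $X$ is a closed set of $M(R)$ if and only if $R^{*}(X)=X$.
   Context: For $x\in U$, $RN(x)=\{y\in U\mid xRy\}$; $R^{*}(X)=\{x\in U\mid RN(x)\cap X\neq\emptyset\}$. Let $\mathbf{S}(R)=\{X\subseteq U\mid R^{*}(X)=U\}$. The support matroid $M(R)=(U,\mathbf{I}(R))$ is the matroid on $U$ whose independent sets $\mathbf{I}(R)$ are the subsets of inclusion-minimal members of $\mathbf{S}(R)$. For a matroid $(U,\mathbf{I})$, the rank is $r(X)=\max\{|I|\mid I\subseteq X, I\in\mathbf{I}\}$, the closure is $cl(X)=\{e\in U\mid r(X)=r(X\cup\{e\})\}$, and $X$ is closed if $cl(X)=X$. *)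

theory Defs
  imports Main
begin

definition RN :: "'a set \<Rightarrow> ('a \<times> 'a) set \<Rightarrow> 'a \<Rightarrow> 'a set" where
  "RN U R x = {y \<in> U. (x, y) \<in> R}"

definition upper_approx :: "'a set \<Rightarrow> ('a \<times> 'a) set \<Rightarrow> 'a set \<Rightarrow> 'a set" where
  "upper_approx U R X = {x \<in> U. RN U R x \<inter> X \<noteq> {}}"

definition supports :: "'a set \<Rightarrow> ('a \<times> 'a) set \<Rightarrow> 'a set set" where
  "supports U R = {X. X \<subseteq> U \<and> upper_approx U R X = U}"

definition minimal_supports :: "'a set \<Rightarrow> ('a \<times> 'a) set \<Rightarrow> 'a set set" where
  "minimal_supports U R =
     {X \<in> supports U R. \<forall>Y \<in> supports U R. Y \<subseteq> X \<longrightarrow> Y = X}"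

definition supp_indep :: "'a set \<Rightarrow> ('a \<times> 'a) set \<Rightarrow> 'a set set" where
  "supp_indep U R = {I. \<exists>B \<in> minimal_supports U R. I \<subseteq> B}"

definition supp_rank :: "'a set \<Rightarrow> ('a \<times> 'a) set \<Rightarrow> 'a set \<Rightarrow> nat" where
  "supp_rank U R X = Max {card I | I. I \<subseteq> X \<and> I \<in> supp_indep U R}"

definition supp_cl :: "'a set \<Rightarrow> ('a \<times> 'a) set \<Rightarrow> 'a set \<Rightarrow> 'a set" where
  "supp_cl U R X = {e \<in> U. supp_rank U R X = supp_rank U R (insert e X)}"

definition supp_closed :: "'a set \<Rightarrow> ('a \<times> 'a) set \<Rightarrow> 'a set \<Rightarrow> bool" where
  "supp_closed U R X \<longleftrightarrow> supp_cl U R X = X"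

end

theory Submission
  imports Defs
begin

text \<open>For an equivalence relation, R*(X) is the union of the classes meeting X, the minimal
  supports are exactly the transversals of the partition, and hence the independent sets are
  the partial transversals. So the rank of X is the number of classes that X meets, adding e
  to X keeps the rank iff the class of e already meets X, and the closure of X is R*(X).\<close>

lemma upper_approx_equiv:
  assumes "equiv U R"
  shows "upper_approx U R X = R``X"
proof -
  have "R \<subseteq> U \<times> U" "sym R"
    using assms by (auto dest: equiv_type elim: equivE)
  then show ?thesis
    unfolding upper_approx_def RN_def by (auto dest: symD)
qed

lemma supports_equiv:
  assumes "equiv U R"
  shows "X \<in> supports U R \<longleftrightarrow> X \<subseteq> U \<and> R``X = U"
  unfolding supports_def upper_approx_equiv[OF assms] by blast

lemma minimal_supports_equiv:
  assumes eq: "equiv U R"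
  shows "B \<in> minimal_supports U R \<longleftrightarrow> B \<in> supports U R \<and> inj_on (\<lambda>x. R``{x}) B"
proof
  assume B: "B \<in> minimal_supports U R"
  then have sup: "B \<in> supports U R"
    and minimal: "\<And>Y. Y \<in> supports U R \<Longrightarrow> Y \<subseteq> B \<Longrightarrow> Y = B"
    unfolding minimal_supports_def by auto
  have BU: "B \<subseteq> U" and cover: "R``B = U"
    using sup by (simp_all add: supports_equiv[OF eq])
  have "inj_on (\<lambda>x. R``{x}) B"
  proof (rule inj_onI, rule ccontr)
    fix a b assume a: "a \<in> B" and b: "b \<in> B" and same: "R``{a} = R``{b}" and "a \<noteq> b"
    have "R``B \<subseteq> R``(B - {b})"
      using a \<open>a \<noteq> b\<close> same by blast
    then have "B - {b} \<in> supports U R"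
      using BU cover by (auto simp: supports_equiv[OF eq])
    then have "B - {b} = B"
      using minimal by blast
    then show False
      using b by blast
  qed
  then show "B \<in> supports U R \<and> inj_on (\<lambda>x. R``{x}) B"
    using sup by blast
next
  assume B: "B \<in> supports U R \<and> inj_on (\<lambda>x. R``{x}) B"
  have "Y = B" if Y: "Y \<in> supports U R" "Y \<subseteq> B" for Y
  proof (rule equalityI[OF Y(2)], rule subsetI)
    fix b assume "b \<in> B"
    have "R``Y = U" "B \<subseteq> U"
      using B Y by (simp_all add: supports_equiv[OF eq])
    then obtain y where "y \<in> Y" and "(y, b) \<in> R"
      using \<open>b \<in> B\<close> by blast
    from equiv_class_eq[OF eq this(2)] have "R``{y} = R``{b}" .
    then have "y = b"
      using B \<open>b \<in> B\<close> \<open>y \<in> Y\<close> Y(2) by (blast dest: inj_onD)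
    then show "b \<in> Y"
      using \<open>y \<in> Y\<close> by simp
  qed
  then show "B \<in> minimal_supports U R"
    using B unfolding minimal_supports_def by blast
qed

lemma supp_indep_equiv:
  assumes eq: "equiv U R"
  shows "I \<in> supp_indep U R \<longleftrightarrow> I \<subseteq> U \<and> inj_on (\<lambda>x. R``{x}) I"
proof
  assume "I \<in> supp_indep U R"
  then obtain B where "B \<in> minimal_supports U R" and "I \<subseteq> B"
    unfolding supp_indep_def by blast
  then have "B \<subseteq> U" and "inj_on (\<lambda>x. R``{x}) B"
    by (simp_all add: minimal_supports_equiv[OF eq] supports_equiv[OF eq])
  with \<open>I \<subseteq> B\<close> show "I \<subseteq> U \<and> inj_on (\<lambda>x. R``{x}) I"
    using inj_on_subset by blast
next
  let ?c = "\<lambda>x. R``{x}"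
  assume I: "I \<subseteq> U \<and> inj_on ?c I"
  obtain T where T: "T \<subseteq> U" "inj_on ?c T" "?c ` T = ?c ` U"
    using subset_image_inj[of "?c ` U" ?c U, THEN iffD1, OF order_refl] by metis
  define T' where "T' = {t \<in> T. ?c t \<notin> ?c ` I}"
  have "inj_on ?c T'"
    using T(2) by (rule inj_on_subset) (simp add: T'_def)
  moreover have "?c ` I \<inter> ?c ` T' = {}"
    unfolding T'_def by blast
  ultimately have inj: "inj_on ?c (I \<union> T')"
    using I by (auto simp add: inj_on_Un)
  have "U \<subseteq> R``(I \<union> T')"
  proof
    fix x assume "x \<in> U"
    then have "?c x \<in> ?c ` T"
      using T(3) by simp
    then obtain t where "t \<in> T" and "?c x = ?c t"
      by (auto simp del: Image_singleton_iff)
    have "?c x \<in> ?c ` (I \<union> T')"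
    proof (cases "?c t \<in> ?c ` I")
      case True
      then show ?thesis
        using \<open>?c x = ?c t\<close> by auto
    next
      case False
      then show ?thesis
        using \<open>t \<in> T\<close> \<open>?c x = ?c t\<close> unfolding T'_def by auto
    qed
    then show "x \<in> R``(I \<union> T')"
      using equiv_class_self[OF eq \<open>x \<in> U\<close>] by auto
  qed
  moreover have "R``(I \<union> T') \<subseteq> U"
    using equiv_type[OF eq] by blast
  moreover have "I \<union> T' \<subseteq> U"
    unfolding T'_def using I T(1) by blast
  ultimately have "I \<union> T' \<in> supports U R"
    unfolding supports_equiv[OF eq] by blast
  with inj have "I \<union> T' \<in> minimal_supports U R"
    unfolding minimal_supports_equiv[OF eq] by blast
  then show "I \<in> supp_indep U R"
    unfolding supp_indep_def by blast
qed

lemma supp_rank_equiv: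
  assumes "finite U" and eq: "equiv U R" and "X \<subseteq> U"
  shows "supp_rank U R X = card ((\<lambda>x. R``{x}) ` X)"
proof -
  let ?c = "\<lambda>x. R``{x}"
  let ?ranks = "{card I | I. I \<subseteq> X \<and> I \<in> supp_indep U R}"
  have "finite X"
    using assms(1,3) by (rule finite_subset[rotated])
  have bound: "n \<le> card (?c ` X)" if "n \<in> ?ranks" for n
  proof -
    obtain I where I: "n = card I" "I \<subseteq> X" "I \<in> supp_indep U R"
      using \<open>n \<in> ?ranks\<close> by blast
    then have "card I = card (?c ` I)"
      by (simp add: supp_indep_equiv[OF eq] card_image)
    also have "\<dots> \<le> card (?c ` X)"
      using I(2) \<open>finite X\<close> by (simp add: card_mono image_mono)
    finally show ?thesis
      using I(1) by simp
  qed
  obtain J where J: "J \<subseteq> X" "inj_on ?c J" "?c ` J = ?c ` X"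
    using subset_image_inj[of "?c ` X" ?c X, THEN iffD1, OF order_refl] by metis
  then have "J \<in> supp_indep U R"
    unfolding supp_indep_equiv[OF eq] using \<open>X \<subseteq> U\<close> by blast
  moreover have "card J = card (?c ` X)"
    using J by (metis card_image)
  ultimately have "card (?c ` X) \<in> ?ranks"
    using J(1) by (intro CollectI exI[of _ J]) simp
  moreover have "finite ?ranks"
    by (rule finite_subset[of _ "{..card (?c ` X)}"]) (use bound in auto)
  ultimately show ?thesis
    unfolding supp_rank_def using bound by (intro Max_eqI)
qed

lemma supp_cl_equiv:
  assumes fin: "finite U" and eq: "equiv U R" and XU: "X \<subseteq> U"
  shows "supp_cl U R X = R``X"
proof (rule set_eqI)
  let ?c = "\<lambda>x. R``{x}"
  fix e
  show "e \<in> supp_cl U R X \<longleftrightarrow> e \<in> R``X"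
  proof (cases "e \<in> U")
    case True
    have "finite (?c ` X)"
      using fin XU finite_subset by blast
    then have "card (?c ` X) = card (?c ` insert e X) \<longleftrightarrow> ?c e \<in> ?c ` X"
      by (simp add: card_insert_if)
    also have "\<dots> \<longleftrightarrow> e \<in> R``X"
      using True XU eq_equiv_class_iff[OF eq] equiv_class_eq_iff[OF eq] by blast
    finally show ?thesis
      unfolding supp_cl_def using True XU supp_rank_equiv[OF fin eq] by simp
  next
    case False
    then show ?thesis
      using eq unfolding supp_cl_def equiv_def refl_on_def by blast
  qed
qed

theorem corollary1:
  fixes U :: "'a set" and R :: "('a \<times> 'a) set" and X :: "'a set"
  assumes "finite U" and "U \<noteq> {}" and "equiv U R" and "X \<subseteq> U"
  shows "supp_closed U R X \<longleftrightarrow> upper_approx U R X = X"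
  unfolding supp_closed_def supp_cl_equiv[OF \<open>finite U\<close> \<open>equiv U R\<close> \<open>X \<subseteq> U\<close>]
    upper_approx_equiv[OF \<open>equiv U R\<close>] ..

end
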